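(* Let $k$ be a field and $\mathsf{E}$ a left strictly locally finite $k$-linear category. Then the essential image of the comodule inclusion functor $\Upsilon_{\mathsf{E}^{op}}$ from right $\mathcal{C}_\mathsf{E}$-comodules to right $\mathsf{E}$-modules is closed under extensions: if $0\to L\to M\to N\to0$ is a short exact sequence of right $\mathsf{E}$-modules and $L$ and $N$ are each isomorphic to $\Upsilon_{\mathsf{E}^{op}}$ of some right $\mathcal{C}_\mathsf{E}$-comodule, then so is $M$.
   Context: A small $k$-linear category $\mathsf{E}$ has $k$-vector spaces $\operatorname{Hom}_\mathsf{E}(x,y)$, $k$-bilinear associative composition and identities with $\mathrm{id}_x\ne0$. A right $\mathsf{E}$-module is a $k$-linear functor $N:\mathsf{E}^{op}\to k\text{-Vect}$ (action maps $\operatorname{Hom}_\mathsf{E}(x,y)\otimes_kN(y)\to N(x)$). Write $x\preceq y$ if there are $n\ge1$ and objects $x=z_0,\dots,z_n=y$ with $\operatorname{Hom}_\mathsf{E}(z_{i-1},z_i)\neq0$ for all $i$; $x\prec y$ means $x\preceq y$ and not $y\preceq x$. $\mathsf{E}$ is locally finite if all $\operatorname{Hom}_\mathsf{E}(x,y)$ are finite-dimensional and every $\{z:x\preceq z\preceq y\}$ is finite; left strictly locally finite if moreover for every $y$ there is a finite set $X_y$ of objects with $x\prec y$ for $x\in X_y$ such that every $f:z\to y$ with $z\prec y$ equals $\sum_{i=1}^nh_ig_i$ ($n\ge0$) with $g_i:z\to x_i$, $h_i:x_i\to y$, $x_i\in X_y$. $\mathcal{C}_\mathsf{E}=\bigoplus_{x,y}\mathcal{C}^{x,y}$,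 $\mathcal{C}^{x,y}=\operatorname{Hom}_\mathsf{E}(x,y)^*$; counit zero on $\mathcal{C}^{x,y}$ for $x\ne y$, evaluation at $\mathrm{id}_x$ on $\mathcal{C}^{x,x}$; comultiplication $\mathcal{C}^{x,y}\to\bigoplus_z\mathcal{C}^{x,z}\otimes\mathcal{C}^{z,y}$ dual to composition $g\otimes h\mapsto hg$. For a right comodule $(\mathcal{N},\nu:\mathcal{N}\to\mathcal{N}\otimes\mathcal{C}_\mathsf{E})$, $\varphi\cdot n=(\mathrm{id}\otimes\varphi)\nu(n)$. With $e_x$ evaluation at $\mathrm{id}_x$ on $\mathcal{C}^{x,x}$ (zero elsewhere) and $\mathrm{ev}_f$, for $f\in\operatorname{Hom}_\mathsf{E}(x,y)$, evaluation at $f$ on $\mathcal{C}^{x,y}$ (zero elsewhere): $\Upsilon_{\mathsf{E}^{op}}(\mathcal{N})(x)=e_x\cdot\mathcal{N}$ and $f$ acts $e_y\cdot\mathcal{N}\to e_x\cdot\mathcal{N}$ by $n\mapsto\mathrm{ev}_f\cdot n$. *)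

theory Defs
  imports Complex_Main "HOL-Library.Function_Algebras"
begin

text \<open>A k-linear category: objects are the elements of a type 'o; all
hom-spaces Hom x y are subspaces of one ambient k-vector space of type 'm (scalar
multiplication sE); composition is indexed by objects: cmp x y z h g is h g for
g : x -> y and h : y -> z; ide x is the identity of x.
Right E-modules: N(x) = Mc x, subspaces of an ambient k-vector space (scale sM),
action act x y f : N(y) -> N(x) for f in Hom x y.\<close>

definition lin_on :: "('k::field \<Rightarrow> 'a::ab_group_add \<Rightarrow> 'a) \<Rightarrow> ('k \<Rightarrow> 'b::ab_group_add \<Rightarrow> 'b)
    \<Rightarrow> 'a set \<Rightarrow> ('a \<Rightarrow> 'b) \<Rightarrow> bool" where
  "lin_on s1 s2 A f \<longleftrightarrow>
     (\<forall>a\<in>A. \<forall>b\<in>A. f (a + b) = f a + f b) \<and> (\<forall>c. \<forall>a\<in>A. f (s1 c a) = s2 c (f a))"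

definition klin_cat :: "('k::field \<Rightarrow> 'm::ab_group_add \<Rightarrow> 'm) \<Rightarrow> ('o \<Rightarrow> 'o \<Rightarrow> 'm set)
    \<Rightarrow> ('o \<Rightarrow> 'o \<Rightarrow> 'o \<Rightarrow> 'm \<Rightarrow> 'm \<Rightarrow> 'm) \<Rightarrow> ('o \<Rightarrow> 'm) \<Rightarrow> bool" where
  "klin_cat sE Hom cmp ide \<longleftrightarrow>
     vector_space sE \<and>
     (\<forall>x y. module.subspace sE (Hom x y)) \<and>
     (\<forall>x y z g h. g \<in> Hom x y \<longrightarrow> h \<in> Hom y z \<longrightarrow> cmp x y z h g \<in> Hom x z) \<and>
     (\<forall>x y z h. h \<in> Hom y z \<longrightarrow> lin_on sE sE (Hom x y) (cmp x y z h)) \<and>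
     (\<forall>x y z g. g \<in> Hom x y \<longrightarrow> lin_on sE sE (Hom y z) (\<lambda>h. cmp x y z h g)) \<and>
     (\<forall>w x y z f g h. f \<in> Hom w x \<longrightarrow> g \<in> Hom x y \<longrightarrow> h \<in> Hom y z \<longrightarrow>
        cmp w y z h (cmp w x y g f) = cmp w x z (cmp x y z h g) f) \<and>
     (\<forall>x. ide x \<in> Hom x x \<and> ide x \<noteq> 0) \<and>
     (\<forall>x y f. f \<in> Hom x y \<longrightarrow> cmp x x y f (ide x) = f \<and> cmp x y y (ide y) f = f)"

definition prec_eq :: "('o \<Rightarrow> 'o \<Rightarrow> 'm::zero set) \<Rightarrow> 'o \<Rightarrow> 'o \<Rightarrow> bool" where
  "prec_eq Hom x y \<longleftrightarrow> (x, y) \<in> {(a, b). Hom a b \<noteq> {0}}\<^sup>+"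

definition prec :: "('o \<Rightarrow> 'o \<Rightarrow> 'm::zero set) \<Rightarrow> 'o \<Rightarrow> 'o \<Rightarrow> bool" where
  "prec Hom x y \<longleftrightarrow> prec_eq Hom x y \<and> \<not> prec_eq Hom y x"

definition fin_dim :: "('k::field \<Rightarrow> 'm::ab_group_add \<Rightarrow> 'm) \<Rightarrow> 'm set \<Rightarrow> bool" where
  "fin_dim sE H \<longleftrightarrow> (\<exists>B. finite B \<and> B \<subseteq> H \<and> module.span sE B = H)"

definition locally_finite :: "('k::field \<Rightarrow> 'm::ab_group_add \<Rightarrow> 'm) \<Rightarrow> ('o \<Rightarrow> 'o \<Rightarrow> 'm set) \<Rightarrow> bool" where
  "locally_finite sE Hom \<longleftrightarrow>
     (\<forall>x y. fin_dim sE (Hom x y)) \<and>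
     (\<forall>x y. finite {z. prec_eq Hom x z \<and> prec_eq Hom z y})"

definition left_slf :: "('k::field \<Rightarrow> 'm::ab_group_add \<Rightarrow> 'm) \<Rightarrow> ('o \<Rightarrow> 'o \<Rightarrow> 'm set)
    \<Rightarrow> ('o \<Rightarrow> 'o \<Rightarrow> 'o \<Rightarrow> 'm \<Rightarrow> 'm \<Rightarrow> 'm) \<Rightarrow> bool" where
  "left_slf sE Hom cmp \<longleftrightarrow>
     locally_finite sE Hom \<and>
     (\<forall>y. \<exists>X. finite X \<and> (\<forall>x\<in>X. prec Hom x y) \<and>
        (\<forall>z f. prec Hom z y \<longrightarrow> f \<in> Hom z y \<longrightarrow>
           (\<exists>(n::nat) xs g h. (\<forall>i<n. xs i \<in> X \<and> g i \<in> Hom z (xs i) \<and> h i \<in> Hom (xs i) y) \<and>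
              f = (\<Sum>i<n. cmp z (xs i) y (h i) (g i)))))"

definition right_module :: "('k::field \<Rightarrow> 'm::ab_group_add \<Rightarrow> 'm) \<Rightarrow> ('o \<Rightarrow> 'o \<Rightarrow> 'm set)
    \<Rightarrow> ('o \<Rightarrow> 'o \<Rightarrow> 'o \<Rightarrow> 'm \<Rightarrow> 'm \<Rightarrow> 'm) \<Rightarrow> ('o \<Rightarrow> 'm)
    \<Rightarrow> ('k \<Rightarrow> 'v::ab_group_add \<Rightarrow> 'v) \<Rightarrow> ('o \<Rightarrow> 'v set) \<Rightarrow> ('o \<Rightarrow> 'o \<Rightarrow> 'm \<Rightarrow> 'v \<Rightarrow> 'v) \<Rightarrow> bool" where
  "right_module sE Hom cmp ide sM Mc act \<longleftrightarrow>
     vector_space sM \<and>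
     (\<forall>x. module.subspace sM (Mc x)) \<and>
     (\<forall>x y f m. f \<in> Hom x y \<longrightarrow> m \<in> Mc y \<longrightarrow> act x y f m \<in> Mc x) \<and>
     (\<forall>x y f. f \<in> Hom x y \<longrightarrow> lin_on sM sM (Mc y) (act x y f)) \<and>
     (\<forall>x y m. m \<in> Mc y \<longrightarrow> lin_on sE sM (Hom x y) (\<lambda>f. act x y f m)) \<and>
     (\<forall>x m. m \<in> Mc x \<longrightarrow> act x x (ide x) m = m) \<and>
     (\<forall>x y z g h m. g \<in> Hom x y \<longrightarrow> h \<in> Hom y z \<longrightarrow> m \<in> Mc z \<longrightarrow>
        act x z (cmp x y z h g) m = act x y g (act y z h m))"

definition mod_hom :: "('o \<Rightarrow> 'o \<Rightarrow> 'm set)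
    \<Rightarrow> ('k::field \<Rightarrow> 'a::ab_group_add \<Rightarrow> 'a) \<Rightarrow> ('o \<Rightarrow> 'a set) \<Rightarrow> ('o \<Rightarrow> 'o \<Rightarrow> 'm \<Rightarrow> 'a \<Rightarrow> 'a)
    \<Rightarrow> ('k \<Rightarrow> 'b::ab_group_add \<Rightarrow> 'b) \<Rightarrow> ('o \<Rightarrow> 'b set) \<Rightarrow> ('o \<Rightarrow> 'o \<Rightarrow> 'm \<Rightarrow> 'b \<Rightarrow> 'b)
    \<Rightarrow> ('o \<Rightarrow> 'a \<Rightarrow> 'b) \<Rightarrow> bool" where
  "mod_hom Hom sA Ac actA sB Bc actB \<phi> \<longleftrightarrow>
     (\<forall>x. \<phi> x ` Ac x \<subseteq> Bc x \<and> lin_on sA sB (Ac x) (\<phi> x)) \<and>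
     (\<forall>x y f m. f \<in> Hom x y \<longrightarrow> m \<in> Ac y \<longrightarrow> \<phi> x (actA x y f m) = actB x y f (\<phi> y m))"

definition mod_iso :: "('o \<Rightarrow> 'o \<Rightarrow> 'm set)
    \<Rightarrow> ('k::field \<Rightarrow> 'a::ab_group_add \<Rightarrow> 'a) \<Rightarrow> ('o \<Rightarrow> 'a set) \<Rightarrow> ('o \<Rightarrow> 'o \<Rightarrow> 'm \<Rightarrow> 'a \<Rightarrow> 'a)
    \<Rightarrow> ('k \<Rightarrow> 'b::ab_group_add \<Rightarrow> 'b) \<Rightarrow> ('o \<Rightarrow> 'b set) \<Rightarrow> ('o \<Rightarrow> 'o \<Rightarrow> 'm \<Rightarrow> 'b \<Rightarrow> 'b)
    \<Rightarrow> ('o \<Rightarrow> 'a \<Rightarrow> 'b) \<Rightarrow> bool" where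
  "mod_iso Hom sA Ac actA sB Bc actB \<phi> \<longleftrightarrow>
     mod_hom Hom sA Ac actA sB Bc actB \<phi> \<and> (\<forall>x. bij_betw (\<phi> x) (Ac x) (Bc x))"

definition short_exact :: "('o \<Rightarrow> 'o \<Rightarrow> 'm set)
    \<Rightarrow> ('k::field \<Rightarrow> 'l::ab_group_add \<Rightarrow> 'l) \<Rightarrow> ('o \<Rightarrow> 'l set) \<Rightarrow> ('o \<Rightarrow> 'o \<Rightarrow> 'm \<Rightarrow> 'l \<Rightarrow> 'l)
    \<Rightarrow> ('k \<Rightarrow> 'v::ab_group_add \<Rightarrow> 'v) \<Rightarrow> ('o \<Rightarrow> 'v set) \<Rightarrow> ('o \<Rightarrow> 'o \<Rightarrow> 'm \<Rightarrow> 'v \<Rightarrow> 'v)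
    \<Rightarrow> ('k \<Rightarrow> 'n::ab_group_add \<Rightarrow> 'n) \<Rightarrow> ('o \<Rightarrow> 'n set) \<Rightarrow> ('o \<Rightarrow> 'o \<Rightarrow> 'm \<Rightarrow> 'n \<Rightarrow> 'n)
    \<Rightarrow> ('o \<Rightarrow> 'l \<Rightarrow> 'v) \<Rightarrow> ('o \<Rightarrow> 'v \<Rightarrow> 'n) \<Rightarrow> bool" where
  "short_exact Hom sL Lc actL sM Mc actM sN Nc actN \<alpha> \<beta> \<longleftrightarrow>
     mod_hom Hom sL Lc actL sM Mc actM \<alpha> \<and> mod_hom Hom sM Mc actM sN Nc actN \<beta> \<and>
     (\<forall>x. inj_on (\<alpha> x) (Lc x) \<and> \<beta> x ` Mc x = Nc x \<and> \<alpha> x ` Lc x = {m \<in> Mc x. \<beta> x m = 0})"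

text \<open>Since every Hom x y is finite-dimensional, an element of
N \<otimes> C_E = \<Oplus>_{x,y} N \<otimes> Hom(x,y)^* is the same as a finitely supported family of linear
maps Hom(x,y) -> N (canonical isomorphism N \<otimes> V^* = Hom_k(V,N) for finite-dim V).
We encode the coaction nu by coact n x y : Hom x y -> N, i.e. coact n x y f = ev_f . n.
Counit axiom (id \<otimes> \<epsilon>) nu = id and coassociativity (nu \<otimes> id) nu = (id \<otimes> \<Delta>) nu
are written out under this identification.\<close>

definition right_comodule :: "('k::field \<Rightarrow> 'm::ab_group_add \<Rightarrow> 'm) \<Rightarrow> ('o \<Rightarrow> 'o \<Rightarrow> 'm set)
    \<Rightarrow> ('o \<Rightarrow> 'o \<Rightarrow> 'o \<Rightarrow> 'm \<Rightarrow> 'm \<Rightarrow> 'm) \<Rightarrow> ('o \<Rightarrow> 'm)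
    \<Rightarrow> ('k \<Rightarrow> 'c::ab_group_add \<Rightarrow> 'c) \<Rightarrow> 'c set \<Rightarrow> ('c \<Rightarrow> 'o \<Rightarrow> 'o \<Rightarrow> 'm \<Rightarrow> 'c) \<Rightarrow> bool" where
  "right_comodule sE Hom cmp ide sC Cc coact \<longleftrightarrow>
     vector_space sC \<and> module.subspace sC Cc \<and>
     (\<forall>n x y f. n \<in> Cc \<longrightarrow> f \<in> Hom x y \<longrightarrow> coact n x y f \<in> Cc) \<and>
     (\<forall>x y f. f \<in> Hom x y \<longrightarrow> lin_on sC sC Cc (\<lambda>n. coact n x y f)) \<and>
     (\<forall>n x y. n \<in> Cc \<longrightarrow> lin_on sE sC (Hom x y) (coact n x y)) \<and>
     (\<forall>n\<in>Cc. finite {(x, y). \<exists>f\<in>Hom x y. coact n x y f \<noteq> 0}) \<and>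
     (\<forall>n\<in>Cc. n = (\<Sum>x\<in>{x. coact n x x (ide x) \<noteq> 0}. coact n x x (ide x))) \<and>
     (\<forall>n\<in>Cc. \<forall>x z z' y g h. g \<in> Hom x z \<longrightarrow> h \<in> Hom z' y \<longrightarrow>
        coact (coact n z' y h) x z g = (if z = z' then coact n x y (cmp x z y h g) else 0))"

text \<open>The functor Upsilon: Upsilon(N)(x) = e_x . N and f : x -> y acts by n |-> ev_f . n.\<close>

definition ups_car :: "'c set \<Rightarrow> ('c \<Rightarrow> 'o \<Rightarrow> 'o \<Rightarrow> 'm \<Rightarrow> 'c) \<Rightarrow> ('o \<Rightarrow> 'm) \<Rightarrow> 'o \<Rightarrow> 'c set" where
  "ups_car Cc coact ide x = (\<lambda>n. coact n x x (ide x)) ` Cc"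

definition ups_act :: "('c \<Rightarrow> 'o \<Rightarrow> 'o \<Rightarrow> 'm \<Rightarrow> 'c) \<Rightarrow> 'o \<Rightarrow> 'o \<Rightarrow> 'm \<Rightarrow> 'c \<Rightarrow> 'c" where
  "ups_act coact x y f n = coact n x y f"

text \<open>Membership in the essential image of Upsilon, with the comodule carried by the
type 'c (given by the TYPE argument).\<close>

definition in_ess_image :: "'c::ab_group_add itself \<Rightarrow> ('k::field \<Rightarrow> 'm::ab_group_add \<Rightarrow> 'm)
    \<Rightarrow> ('o \<Rightarrow> 'o \<Rightarrow> 'm set) \<Rightarrow> ('o \<Rightarrow> 'o \<Rightarrow> 'o \<Rightarrow> 'm \<Rightarrow> 'm \<Rightarrow> 'm) \<Rightarrow> ('o \<Rightarrow> 'm)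
    \<Rightarrow> ('k \<Rightarrow> 'v::ab_group_add \<Rightarrow> 'v) \<Rightarrow> ('o \<Rightarrow> 'v set) \<Rightarrow> ('o \<Rightarrow> 'o \<Rightarrow> 'm \<Rightarrow> 'v \<Rightarrow> 'v) \<Rightarrow> bool" where
  "in_ess_image _ sE Hom cmp ide sM Mc act \<longleftrightarrow>
     (\<exists>(sC :: 'k \<Rightarrow> 'c \<Rightarrow> 'c) Cc coact.
        right_comodule sE Hom cmp ide sC Cc coact \<and>
        (\<exists>\<phi>. mod_iso Hom sM Mc act sC (ups_car Cc coact ide) (ups_act coact) \<phi>))"

end

theory Submission
  imports Defs
begin

text \<open>Call an element m of M(x) finitely supported if only finitely many objects z admit a
morphism f : z \<rightarrow> x with m f \<noteq> 0. Every module in the essential image of \<Upsilon> has only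
finitely supported elements, since the coaction of a comodule element has finitely many nonzero
components; conversely such a module M is \<Upsilon> of the comodule \<Oplus>_x M(x) whose coaction is the
action of M. So it suffices to show that finite support passes to extensions.
For w in M(x), the image of w in N has support in a finite set T. If this image vanishes, w lies
in L. Otherwise x \<in> T, and left strict local finiteness covers the support of w by the finite
interval [x, x] together with the supports of finitely many translates w h \<in> M(x') with x' \<prec> x,
whose images in N again have support in T. The induction runs on the size of the union of the
intervals [t, x] with t \<in> T, a finite set that shrinks strictly when x is replaced by x'.\<close>

lemma lin_on_zero:
  assumes "lin_on s1 s2 A f" and "0 \<in> A"
  shows "f 0 = 0"
proof -
  have "f (0 + 0) = f 0 + f 0" using assms unfolding lin_on_def by blast
  then show ?thesis by simp
qed

lemma sum_fun_apply: "finite S \<Longrightarrow> (\<Sum>x\<in>S. F x) z = (\<Sum>x\<in>S. F x z)"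
  by (induction S rule: finite_induct) auto

lemma prec_eq_trans: "prec_eq Hom x y \<Longrightarrow> prec_eq Hom y z \<Longrightarrow> prec_eq Hom x z"
  unfolding prec_eq_def by (rule trancl_trans)

lemma prec_eq_if_hom_nonzero: "f \<in> Hom x y \<Longrightarrow> f \<noteq> 0 \<Longrightarrow> prec_eq Hom x y"
  unfolding prec_eq_def by (intro r_into_trancl) auto

locale klin_category =
  fixes sE :: "'k::field \<Rightarrow> 'm::ab_group_add \<Rightarrow> 'm" and Hom :: "'o \<Rightarrow> 'o \<Rightarrow> 'm set"
    and cmp :: "'o \<Rightarrow> 'o \<Rightarrow> 'o \<Rightarrow> 'm \<Rightarrow> 'm \<Rightarrow> 'm" and ide :: "'o \<Rightarrow> 'm"
  assumes klin_cat: "klin_cat sE Hom cmp ide"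
begin

sublocale E: vector_space sE
  using klin_cat by (simp add: klin_cat_def)

lemma hom_subspace: "E.subspace (Hom x y)"
  using klin_cat by (simp add: klin_cat_def)

lemma zero_in_hom: "0 \<in> Hom x y"
  using E.subspace_0[OF hom_subspace] .

lemma add_in_hom: "f \<in> Hom x y \<Longrightarrow> g \<in> Hom x y \<Longrightarrow> f + g \<in> Hom x y"
  using E.subspace_add[OF hom_subspace] .

lemma scale_in_hom: "f \<in> Hom x y \<Longrightarrow> sE c f \<in> Hom x y"
  using E.subspace_scale[OF hom_subspace] .

lemma cmp_in_hom: "g \<in> Hom x y \<Longrightarrow> h \<in> Hom y z \<Longrightarrow> cmp x y z h g \<in> Hom x z"
  using klin_cat by (simp add: klin_cat_def)

lemma ide_in_hom: "ide x \<in> Hom x x"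
  using klin_cat by (simp add: klin_cat_def)

lemma prec_eq_refl: "prec_eq Hom x x"
  using klin_cat ide_in_hom
  by (intro prec_eq_if_hom_nonzero[of "ide x"]) (simp_all add: klin_cat_def)

end

locale right_E_module = klin_category sE Hom cmp ide
  for sE :: "'k::field \<Rightarrow> 'm::ab_group_add \<Rightarrow> 'm" and Hom :: "'o \<Rightarrow> 'o \<Rightarrow> 'm set"
    and cmp :: "'o \<Rightarrow> 'o \<Rightarrow> 'o \<Rightarrow> 'm \<Rightarrow> 'm \<Rightarrow> 'm" and ide :: "'o \<Rightarrow> 'm" +
  fixes sM :: "'k \<Rightarrow> 'v::ab_group_add \<Rightarrow> 'v" and Mc :: "'o \<Rightarrow> 'v set"
    and act :: "'o \<Rightarrow> 'o \<Rightarrow> 'm \<Rightarrow> 'v \<Rightarrow> 'v"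
  assumes right_module: "right_module sE Hom cmp ide sM Mc act"
begin

sublocale M: vector_space sM
  using right_module by (simp add: right_module_def)

lemma car_subspace: "M.subspace (Mc x)"
  using right_module by (simp add: right_module_def)

lemma zero_in_car: "0 \<in> Mc x"
  using M.subspace_0[OF car_subspace] .

lemma add_in_car: "a \<in> Mc x \<Longrightarrow> b \<in> Mc x \<Longrightarrow> a + b \<in> Mc x"
  using M.subspace_add[OF car_subspace] .

lemma scale_in_car: "a \<in> Mc x \<Longrightarrow> sM c a \<in> Mc x"
  using M.subspace_scale[OF car_subspace] .

lemma act_in_car: "f \<in> Hom x y \<Longrightarrow> m \<in> Mc y \<Longrightarrow> act x y f m \<in> Mc x"
  using right_module by (simp add: right_module_def)

lemma act_add:
  "f \<in> Hom x y \<Longrightarrow> a \<in> Mc y \<Longrightarrow> b \<in> Mc y \<Longrightarrow> act x y f (a + b) = act x y f a + act x y f b"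
  using right_module by (simp add: right_module_def lin_on_def)

lemma act_scale: "f \<in> Hom x y \<Longrightarrow> a \<in> Mc y \<Longrightarrow> act x y f (sM c a) = sM c (act x y f a)"
  using right_module by (simp add: right_module_def lin_on_def)

lemma act_add_hom:
  "f \<in> Hom x y \<Longrightarrow> g \<in> Hom x y \<Longrightarrow> m \<in> Mc y \<Longrightarrow> act x y (f + g) m = act x y f m + act x y g m"
  using right_module by (simp add: right_module_def lin_on_def)

lemma act_scale_hom: "f \<in> Hom x y \<Longrightarrow> m \<in> Mc y \<Longrightarrow> act x y (sE c f) m = sM c (act x y f m)"
  using right_module by (simp add: right_module_def lin_on_def)

lemma act_zero: "f \<in> Hom x y \<Longrightarrow> act x y f 0 = 0"
  using act_add[OF _ zero_in_car zero_in_car] by simp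

lemma zero_act: "m \<in> Mc y \<Longrightarrow> act x y 0 m = 0"
  using act_add_hom[OF zero_in_hom zero_in_hom] by simp

lemma act_ide: "m \<in> Mc x \<Longrightarrow> act x x (ide x) m = m"
  using right_module by (simp add: right_module_def)

lemma act_cmp: "g \<in> Hom x y \<Longrightarrow> h \<in> Hom y z \<Longrightarrow> m \<in> Mc z \<Longrightarrow>
    act x z (cmp x y z h g) m = act x y g (act y z h m)"
  using right_module by (simp add: right_module_def)

lemma act_sum_hom:
  assumes "finite I" and "\<And>i. i \<in> I \<Longrightarrow> F i \<in> Hom x y" and "m \<in> Mc y"
  shows "act x y (\<Sum>i\<in>I. F i) m = (\<Sum>i\<in>I. act x y (F i) m)"
  using assms
proof (induction I rule: finite_induct)
  case empty
  then show ?case using zero_act by simp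
next
  case (insert i I)
  have "(\<Sum>i\<in>I. F i) \<in> Hom x y"
    using insert.prems(1) by (intro E.subspace_sum[OF hom_subspace]) auto
  then show ?case using insert by (simp add: act_add_hom)
qed

end

lemma right_E_moduleI:
  "klin_cat sE Hom cmp ide \<Longrightarrow> right_module sE Hom cmp ide sM Mc act \<Longrightarrow>
    right_E_module sE Hom cmp ide sM Mc act"
  by (simp add: right_E_module_def right_E_module_axioms_def klin_category_def)

section \<open>Supports of module elements\<close>

definition act_support :: "('o \<Rightarrow> 'o \<Rightarrow> 'm set) \<Rightarrow> ('o \<Rightarrow> 'o \<Rightarrow> 'm \<Rightarrow> 'v \<Rightarrow> 'v::zero)
    \<Rightarrow> 'o \<Rightarrow> 'v \<Rightarrow> 'o set"
  where "act_support Hom act x m = {z. \<exists>f\<in>Hom z x. act z x f m \<noteq> 0}"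

definition finite_support_module :: "('o \<Rightarrow> 'o \<Rightarrow> 'm set) \<Rightarrow> ('o \<Rightarrow> 'v::zero set)
    \<Rightarrow> ('o \<Rightarrow> 'o \<Rightarrow> 'm \<Rightarrow> 'v \<Rightarrow> 'v) \<Rightarrow> bool"
  where "finite_support_module Hom Mc act \<longleftrightarrow> (\<forall>x. \<forall>m\<in>Mc x. finite (act_support Hom act x m))"

context right_E_module
begin

lemma act_support_prec_eq:
  assumes "m \<in> Mc x" and "z \<in> act_support Hom act x m"
  shows "prec_eq Hom z x"
  using assms zero_act by (auto simp: act_support_def intro: prec_eq_if_hom_nonzero)

lemma self_in_act_support: "m \<in> Mc x \<Longrightarrow> m \<noteq> 0 \<Longrightarrow> x \<in> act_support Hom act x m"
  using ide_in_hom act_ide unfolding act_support_def by force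

lemma act_support_act:
  assumes f: "f \<in> Hom x y" and m: "m \<in> Mc y"
  shows "act_support Hom act x (act x y f m) \<subseteq> act_support Hom act y m"
proof
  fix z assume "z \<in> act_support Hom act x (act x y f m)"
  then obtain g where g: "g \<in> Hom z x" and "act z x g (act x y f m) \<noteq> 0"
    by (auto simp: act_support_def)
  then have "act z y (cmp z x y f g) m \<noteq> 0" using act_cmp[OF g f m] by simp
  then show "z \<in> act_support Hom act y m" using cmp_in_hom[OF g f] by (auto simp: act_support_def)
qed

lemma act_support_zero: "act_support Hom act x 0 = {}"
  using act_zero by (auto simp: act_support_def)

lemma act_support_add:
  "a \<in> Mc x \<Longrightarrow> b \<in> Mc x \<Longrightarrow>
    act_support Hom act x (a + b) \<subseteq> act_support Hom act x a \<union> act_support Hom act x b"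
  using act_add by (auto simp: act_support_def)

lemma act_support_scale: "a \<in> Mc x \<Longrightarrow> act_support Hom act x (sM c a) \<subseteq> act_support Hom act x a"
  using act_scale by (auto simp: act_support_def)

lemma act_support_span:
  assumes B: "B \<subseteq> Hom x' x" and w: "w \<in> Mc x" and h: "h \<in> E.span B"
  shows "act_support Hom act x' (act x' x h w) \<subseteq> (\<Union>b\<in>B. act_support Hom act x' (act x' x b w))"
    (is "?supp h \<subseteq> ?U")
proof -
  have "h \<in> Hom x' x \<and> ?supp h \<subseteq> ?U"
    using h
  proof (induction rule: E.span_induct_alt)
    case base
    then show ?case using zero_in_hom zero_act[OF w] act_support_zero by simp
  next
    case (step c b h)
    have b: "b \<in> Hom x' x" using step.hyps(1) B by blast
    have hH: "h \<in> Hom x' x" using step.IH ..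
    have "?supp (sE c b + h) = act_support Hom act x' (sM c (act x' x b w) + act x' x h w)"
      using act_add_hom[OF scale_in_hom[OF b] hH w] act_scale_hom[OF b w] by simp
    also have "\<dots> \<subseteq> ?supp b \<union> ?supp h"
      using act_support_add[OF scale_in_car act_in_car] act_support_scale act_in_car b hH w by blast
    finally have "?supp (sE c b + h) \<subseteq> ?U" using step b by blast
    then show ?case using add_in_hom[OF scale_in_hom[OF b] hH] by blast
  qed
  then show ?thesis ..
qed

lemma mod_hom_zero:
  assumes "mod_hom Hom sM Mc act sB Bc actB \<phi>"
  shows "\<phi> x 0 = 0"
  using assms zero_in_car by (intro lin_on_zero[of sM sB "Mc x"]) (simp_all add: mod_hom_def)

lemma act_support_hom_image_subset:
  assumes \<phi>: "mod_hom Hom sM Mc act sB Bc actB \<phi>" and m: "m \<in> Mc x"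
  shows "act_support Hom actB x (\<phi> x m) \<subseteq> act_support Hom act x m"
proof
  fix z assume "z \<in> act_support Hom actB x (\<phi> x m)"
  then obtain f where f: "f \<in> Hom z x" and nz: "actB z x f (\<phi> x m) \<noteq> 0"
    by (auto simp: act_support_def)
  have "\<phi> z (act z x f m) = actB z x f (\<phi> x m)"
    using \<phi> f m unfolding mod_hom_def by blast
  then have "act z x f m \<noteq> 0" using nz mod_hom_zero[OF \<phi>] by force
  then show "z \<in> act_support Hom act x m" using f by (auto simp: act_support_def)
qed

lemma finite_act_support_hom_image:
  assumes "finite_support_module Hom Mc act" and "mod_hom Hom sM Mc act sB Bc actB \<phi>"
    and "m \<in> Mc x"
  shows "finite (act_support Hom actB x (\<phi> x m))"
  using assms act_support_hom_image_subset finite_subset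
  unfolding finite_support_module_def by metis

lemma act_support_subset_inj_hom:
  assumes \<phi>: "mod_hom Hom sM Mc act sB Bc actB \<phi>" and inj: "\<And>z. inj_on (\<phi> z) (Mc z)"
    and m: "m \<in> Mc x"
  shows "act_support Hom act x m \<subseteq> act_support Hom actB x (\<phi> x m)"
proof
  fix z assume "z \<in> act_support Hom act x m"
  then obtain f where f: "f \<in> Hom z x" and nz: "act z x f m \<noteq> 0"
    by (auto simp: act_support_def)
  have "\<phi> z (act z x f m) = actB z x f (\<phi> x m)"
    using \<phi> f m unfolding mod_hom_def by blast
  moreover have "\<phi> z (act z x f m) \<noteq> \<phi> z 0"
    using inj_on_eq_iff[OF inj act_in_car[OF f m] zero_in_car] nz by simp
  ultimately have "actB z x f (\<phi> x m) \<noteq> 0" using mod_hom_zero[OF \<phi>] by simp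
  then show "z \<in> act_support Hom actB x (\<phi> x m)" using f by (auto simp: act_support_def)
qed

lemma finite_support_if_inj_hom:
  assumes fs: "finite_support_module Hom Bc actB" and \<phi>: "mod_hom Hom sM Mc act sB Bc actB \<phi>"
    and inj: "\<And>z. inj_on (\<phi> z) (Mc z)"
  shows "finite_support_module Hom Mc act"
  unfolding finite_support_module_def
proof (intro allI ballI)
  fix x m assume m: "m \<in> Mc x"
  then have "\<phi> x m \<in> Bc x" using \<phi> by (auto simp: mod_hom_def)
  then have "finite (act_support Hom actB x (\<phi> x m))"
    using fs by (simp add: finite_support_module_def)
  then show "finite (act_support Hom act x m)"
    using act_support_subset_inj_hom[OF \<phi> inj m] by (rule finite_subset[rotated])
qed

lemma act_support_factor:
  assumes factor: "\<And>f. f \<in> Hom z x \<Longrightarrow> \<exists>(n::nat) xs g h.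
      (\<forall>i<n. xs i \<in> X \<and> g i \<in> Hom z (xs i) \<and> h i \<in> Hom (xs i) x) \<and>
      f = (\<Sum>i<n. cmp z (xs i) x (h i) (g i))"
    and w: "w \<in> Mc x" and z: "z \<in> act_support Hom act x w"
  obtains x' h where "x' \<in> X" and "h \<in> Hom x' x" and "z \<in> act_support Hom act x' (act x' x h w)"
proof -
  obtain f where f: "f \<in> Hom z x" and nz: "act z x f w \<noteq> 0"
    using z by (auto simp: act_support_def)
  obtain n :: nat and xs g h where
    gh: "\<forall>i<n. xs i \<in> X \<and> g i \<in> Hom z (xs i) \<and> h i \<in> Hom (xs i) x"
    and f_eq: "f = (\<Sum>i<n. cmp z (xs i) x (h i) (g i))"
    using factor[OF f] by blast
  have "act z x f w = (\<Sum>i<n. act z x (cmp z (xs i) x (h i) (g i)) w)"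
    unfolding f_eq using gh w by (intro act_sum_hom) (simp_all add: cmp_in_hom)
  also have "\<dots> = (\<Sum>i<n. act z (xs i) (g i) (act (xs i) x (h i) w))"
    using gh w by (intro sum.cong) (simp_all add: act_cmp)
  finally have "\<exists>i\<in>{..<n}. act z (xs i) (g i) (act (xs i) x (h i) w) \<noteq> 0"
    using nz sum.neutral by force
  then obtain i where i: "i < n" and "act z (xs i) (g i) (act (xs i) x (h i) w) \<noteq> 0"
    by blast
  then show thesis using that gh by (auto simp: act_support_def)
qed

lemma act_support_lower_translates:
  assumes slf: "left_slf sE Hom cmp"
  obtains P where "finite P" and "\<And>x' f. (x', f) \<in> P \<Longrightarrow> prec Hom x' x \<and> f \<in> Hom x' x"
    and "\<And>w. w \<in> Mc x \<Longrightarrow> act_support Hom act x w \<subseteq>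
      {z. prec_eq Hom x z \<and> prec_eq Hom z x} \<union> (\<Union>(x', f)\<in>P. act_support Hom act x' (act x' x f w))"
proof -
  obtain X where X: "finite X" "\<forall>x'\<in>X. prec Hom x' x"
    and factor: "\<forall>z f. prec Hom z x \<longrightarrow> f \<in> Hom z x \<longrightarrow> (\<exists>(n::nat) xs g h.
      (\<forall>i<n. xs i \<in> X \<and> g i \<in> Hom z (xs i) \<and> h i \<in> Hom (xs i) x) \<and>
      f = (\<Sum>i<n. cmp z (xs i) x (h i) (g i)))"
    using slf unfolding left_slf_def by blast
  have "\<forall>x'. \<exists>B. finite B \<and> B \<subseteq> Hom x' x \<and> E.span B = Hom x' x"
    using slf unfolding left_slf_def locally_finite_def fin_dim_def by blast
  then obtain B where B: "\<And>x'. finite (B x')" "\<And>x'. B x' \<subseteq> Hom x' x" "\<And>x'. E.span (B x') = Hom x' x"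
    by metis
  show thesis
  proof
    show "finite (Sigma X B)" using X(1) B(1) by (rule finite_SigmaI)
    show "(x', f) \<in> Sigma X B \<Longrightarrow> prec Hom x' x \<and> f \<in> Hom x' x" for x' f using X B by blast
    fix w assume w: "w \<in> Mc x"
    show "act_support Hom act x w \<subseteq> {z. prec_eq Hom x z \<and> prec_eq Hom z x} \<union>
        (\<Union>(x', f)\<in>Sigma X B. act_support Hom act x' (act x' x f w))" (is "_ \<subseteq> _ \<union> ?U")
    proof
      fix z assume z: "z \<in> act_support Hom act x w"
      have "z \<in> ?U" if "\<not> prec_eq Hom x z"
      proof -
        have "prec Hom z x" using that act_support_prec_eq[OF w z] by (simp add: prec_def)
        then obtain x' h where x': "x' \<in> X" and "h \<in> Hom x' x"
          and "z \<in> act_support Hom act x' (act x' x h w)"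
          using act_support_factor[OF factor[rule_format] w z] by blast
        then obtain b where "b \<in> B x'" and "z \<in> act_support Hom act x' (act x' x b w)"
          using act_support_span[OF B(2) w] B(3) by blast
        then show ?thesis using x' by blast
      qed
      then show "z \<in> {z. prec_eq Hom x z \<and> prec_eq Hom z x} \<union> ?U"
        using act_support_prec_eq[OF w z] by blast
    qed
  qed
qed

end

section \<open>Finite support is closed under extensions\<close>

definition prec_segment :: "('o \<Rightarrow> 'o \<Rightarrow> 'm::zero set) \<Rightarrow> 'o set \<Rightarrow> 'o \<Rightarrow> 'o set"
  where "prec_segment Hom T x = {v. \<exists>t\<in>T. prec_eq Hom t v \<and> prec_eq Hom v x}"

lemma finite_prec_segment:
  assumes "locally_finite sE Hom" and "finite T"
  shows "finite (prec_segment Hom T x)"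
proof (rule finite_subset)
  show "prec_segment Hom T x \<subseteq> (\<Union>t\<in>T. {v. prec_eq Hom t v \<and> prec_eq Hom v x})"
    unfolding prec_segment_def by blast
  show "finite (\<Union>t\<in>T. {v. prec_eq Hom t v \<and> prec_eq Hom v x})"
    using assms by (simp add: locally_finite_def)
qed

lemma (in klin_category) card_prec_segment_less:
  assumes "locally_finite sE Hom" and "finite T" and "x \<in> T" and "prec Hom x' x"
  shows "card (prec_segment Hom T x') < card (prec_segment Hom T x)"
proof (rule psubset_card_mono)
  show "finite (prec_segment Hom T x)" using assms(1,2) by (rule finite_prec_segment)
  have "prec_eq Hom x' x" and "\<not> prec_eq Hom x x'" using assms(4) by (simp_all add: prec_def)
  moreover have "x \<in> prec_segment Hom T x"
    using assms(3) prec_eq_refl unfolding prec_segment_def by blast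
  ultimately show "prec_segment Hom T x' \<subset> prec_segment Hom T x"
    unfolding prec_segment_def by (auto intro: prec_eq_trans)
qed

lemma finite_support_if_quotient_support_bounded:
  fixes sE :: "'k::field \<Rightarrow> 'm::ab_group_add \<Rightarrow> 'm"
    and sL :: "'k \<Rightarrow> 'l::ab_group_add \<Rightarrow> 'l" and sM :: "'k \<Rightarrow> 'v::ab_group_add \<Rightarrow> 'v"
    and sN :: "'k \<Rightarrow> 'n::ab_group_add \<Rightarrow> 'n"
  assumes km: "klin_cat sE Hom cmp ide" and slf: "left_slf sE Hom cmp"
    and rL: "right_module sE Hom cmp ide sL Lc actL"
    and rM: "right_module sE Hom cmp ide sM Mc actM"
    and rN: "right_module sE Hom cmp ide sN Nc actN"
    and se: "short_exact Hom sL Lc actL sM Mc actM sN Nc actN \<alpha> \<beta>"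
    and fsL: "finite_support_module Hom Lc actL" and T: "finite T"
    and "w \<in> Mc x" and "act_support Hom actN x (\<beta> x w) \<subseteq> T"
  shows "finite (act_support Hom actM x w)"
proof -
  interpret klin_category sE Hom cmp ide using km by (rule klin_category.intro)
  interpret L: right_E_module sE Hom cmp ide sL Lc actL using km rL by (rule right_E_moduleI)
  interpret M: right_E_module sE Hom cmp ide sM Mc actM using km rM by (rule right_E_moduleI)
  interpret N: right_E_module sE Hom cmp ide sN Nc actN using km rN by (rule right_E_moduleI)
  have lf: "locally_finite sE Hom" using slf by (simp add: left_slf_def)
  have \<alpha>: "mod_hom Hom sL Lc actL sM Mc actM \<alpha>" and \<beta>: "mod_hom Hom sM Mc actM sN Nc actN \<beta>"
    and ker: "\<And>x. \<alpha> x ` Lc x = {m \<in> Mc x. \<beta> x m = 0}"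
    using se by (simp_all add: short_exact_def)
  show ?thesis
    using assms(9,10)
  proof (induction "card (prec_segment Hom T x)" arbitrary: x w rule: less_induct)
    case less
    have w: "w \<in> Mc x" and w_supp: "act_support Hom actN x (\<beta> x w) \<subseteq> T" by fact+
    have \<beta>w: "\<beta> x w \<in> Nc x" using \<beta> w by (auto simp: mod_hom_def)
    consider "\<beta> x w = 0" | "x \<in> T" using N.self_in_act_support[OF \<beta>w] w_supp by blast
    then show ?case
    proof cases
      case 1
      then obtain l where "l \<in> Lc x" and "w = \<alpha> x l" using ker w by blast
      then show ?thesis using L.finite_act_support_hom_image[OF fsL \<alpha>] by simp
    next
      case 2
      obtain P where P: "finite P" "\<And>x' f. (x', f) \<in> P \<Longrightarrow> prec Hom x' x \<and> f \<in> Hom x' x"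
        and cover: "\<And>w. w \<in> Mc x \<Longrightarrow> act_support Hom actM x w \<subseteq>
          {z. prec_eq Hom x z \<and> prec_eq Hom z x} \<union>
          (\<Union>(x', f)\<in>P. act_support Hom actM x' (actM x' x f w))"
        using M.act_support_lower_translates[OF slf, where x = x] by blast
      have "finite (act_support Hom actM x' (actM x' x f w))" if "(x', f) \<in> P" for x' f
      proof (rule less.hyps)
        have x': "prec Hom x' x" and f: "f \<in> Hom x' x" using P(2)[OF that] by auto
        show "card (prec_segment Hom T x') < card (prec_segment Hom T x)"
          using card_prec_segment_less[OF lf T 2 x'] .
        show "actM x' x f w \<in> Mc x'" using M.act_in_car[OF f w] .
        have "\<beta> x' (actM x' x f w) = actN x' x f (\<beta> x w)"
          using \<beta> f w by (simp add: mod_hom_def)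
        then show "act_support Hom actN x' (\<beta> x' (actM x' x f w)) \<subseteq> T"
          using N.act_support_act[OF f \<beta>w] w_supp by simp
      qed
      then have "finite (\<Union>(x', f)\<in>P. act_support Hom actM x' (actM x' x f w))"
        using P(1) by (auto intro: finite_UN_I)
      moreover have "finite {z. prec_eq Hom x z \<and> prec_eq Hom z x}"
        using lf by (simp add: locally_finite_def)
      ultimately show ?thesis by (intro finite_subset[OF cover[OF w]] finite_UnI)
    qed
  qed
qed

lemma finite_support_extension:
  fixes sE :: "'k::field \<Rightarrow> 'm::ab_group_add \<Rightarrow> 'm"
    and sL :: "'k \<Rightarrow> 'l::ab_group_add \<Rightarrow> 'l" and sM :: "'k \<Rightarrow> 'v::ab_group_add \<Rightarrow> 'v"
    and sN :: "'k \<Rightarrow> 'n::ab_group_add \<Rightarrow> 'n"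
  assumes "klin_cat sE Hom cmp ide" and "left_slf sE Hom cmp"
    and "right_module sE Hom cmp ide sL Lc actL"
    and "right_module sE Hom cmp ide sM Mc actM"
    and "right_module sE Hom cmp ide sN Nc actN"
    and se: "short_exact Hom sL Lc actL sM Mc actM sN Nc actN \<alpha> \<beta>"
    and "finite_support_module Hom Lc actL" and fsN: "finite_support_module Hom Nc actN"
  shows "finite_support_module Hom Mc actM"
  unfolding finite_support_module_def
proof (intro allI ballI)
  fix x w assume w: "w \<in> Mc x"
  then have "\<beta> x w \<in> Nc x" using se unfolding short_exact_def by blast
  then have "finite (act_support Hom actN x (\<beta> x w))"
    using fsN by (simp add: finite_support_module_def)
  then show "finite (act_support Hom actM x w)"
    using finite_support_if_quotient_support_bounded[OF assms(1-7) _ w] by blast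
qed

section \<open>Finitely supported modules and comodules\<close>

lemma (in klin_category) finite_support_ups:
  assumes cm: "right_comodule sE Hom cmp ide sC Cc coact"
  shows "finite_support_module Hom (ups_car Cc coact ide) (ups_act coact)"
  unfolding finite_support_module_def
proof (intro allI ballI)
  fix x n assume "n \<in> ups_car Cc coact ide x"
  then obtain n0 where "n0 \<in> Cc" and "n = coact n0 x x (ide x)"
    by (auto simp: ups_car_def)
  then have n: "n \<in> Cc" using cm ide_in_hom by (simp add: right_comodule_def)
  have "act_support Hom (ups_act coact) x n \<subseteq> fst ` {(z, y). \<exists>f\<in>Hom z y. coact n z y f \<noteq> 0}"
    by (force simp: act_support_def ups_act_def)
  moreover have "finite {(z, y). \<exists>f\<in>Hom z y. coact n z y f \<noteq> 0}"
    using cm n by (simp add: right_comodule_def)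
  ultimately show "finite (act_support Hom (ups_act coact) x n)"
    by (rule finite_subset[OF _ finite_imageI])
qed

context right_E_module
begin

lemma finite_support_if_ess_image:
  assumes "in_ess_image TYPE('c::ab_group_add) sE Hom cmp ide sM Mc act"
  shows "finite_support_module Hom Mc act"
proof -
  obtain sC :: "'k \<Rightarrow> 'c \<Rightarrow> 'c" and Cc coact \<phi> where
    cm: "right_comodule sE Hom cmp ide sC Cc coact" and
    "mod_iso Hom sM Mc act sC (ups_car Cc coact ide) (ups_act coact) \<phi>"
    using assms unfolding in_ess_image_def by blast
  then show ?thesis
    using finite_support_if_inj_hom[OF finite_support_ups[OF cm]]
    by (auto simp: mod_iso_def bij_betw_def)
qed

end

lemma fun_upd_zero_eq_zero_iff: "(0 :: 'a \<Rightarrow> 'b::zero)(x := v) = 0 \<longleftrightarrow> v = 0"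
  by (metis fun_upd_same fun_upd_triv zero_fun_def)

context right_E_module
begin

text \<open>The comodule \<Oplus>_x M(x), with coaction given by the action of M.\<close>

definition dsum_car :: "('o \<Rightarrow> 'v) set"
  where "dsum_car = {n. (\<forall>z. n z \<in> Mc z) \<and> finite {z. n z \<noteq> 0}}"

definition dsum_scale :: "'k \<Rightarrow> ('o \<Rightarrow> 'v) \<Rightarrow> 'o \<Rightarrow> 'v"
  where "dsum_scale c n = (\<lambda>z. sM c (n z))"

definition dsum_coact :: "('o \<Rightarrow> 'v) \<Rightarrow> 'o \<Rightarrow> 'o \<Rightarrow> 'm \<Rightarrow> 'o \<Rightarrow> 'v"
  where "dsum_coact n x y f = 0(x := act x y f (n y))"

lemma dsum_vector_space: "vector_space dsum_scale"
  unfolding vector_space_def dsum_scale_def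
  by (simp add: fun_eq_iff M.scale_right_distrib M.scale_left_distrib)

lemma dsum_subspace: "module.subspace dsum_scale dsum_car"
proof -
  interpret D: vector_space dsum_scale by (rule dsum_vector_space)
  have "{z. (a + b) z \<noteq> 0} \<subseteq> {z. a z \<noteq> 0} \<union> {z. b z \<noteq> 0}" for a b :: "'o \<Rightarrow> 'v" by auto
  moreover have "{z. dsum_scale c a z \<noteq> 0} \<subseteq> {z. a z \<noteq> 0}" for c a
    by (auto simp: dsum_scale_def)
  ultimately show ?thesis
    unfolding D.subspace_def dsum_car_def
    by (auto intro: zero_in_car add_in_car finite_subset simp: dsum_scale_def scale_in_car)
qed

lemma single_in_dsum_car: "v \<in> Mc x \<Longrightarrow> 0(x := v) \<in> dsum_car"
  using zero_in_car by (auto simp: dsum_car_def)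

lemma dsum_coact_support_finite:
  assumes fs: "finite_support_module Hom Mc act" and n: "n \<in> dsum_car"
  shows "finite {(x, y). \<exists>f\<in>Hom x y. dsum_coact n x y f \<noteq> 0}"
proof (rule finite_subset)
  show "{(x, y). \<exists>f\<in>Hom x y. dsum_coact n x y f \<noteq> 0} \<subseteq>
      (\<Union>y\<in>{y. n y \<noteq> 0}. act_support Hom act y (n y) \<times> {y})"
    using act_zero by (force simp: dsum_coact_def fun_upd_zero_eq_zero_iff act_support_def)
  show "finite (\<Union>y\<in>{y. n y \<noteq> 0}. act_support Hom act y (n y) \<times> {y})"
    using fs n by (auto simp: dsum_car_def finite_support_module_def)
qed

lemma dsum_counit:
  assumes n: "n \<in> dsum_car"
  shows "n = (\<Sum>x\<in>{x. dsum_coact n x x (ide x) \<noteq> 0}. dsum_coact n x x (ide x))"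
proof
  fix z
  have coact_ide: "dsum_coact n x x (ide x) = 0(x := n x)" for x
    using n act_ide by (simp add: dsum_coact_def dsum_car_def)
  have fin: "finite {x. n x \<noteq> 0}" using n by (simp add: dsum_car_def)
  have "{x. dsum_coact n x x (ide x) \<noteq> 0} = {x. n x \<noteq> 0}"
    by (simp add: coact_ide fun_upd_zero_eq_zero_iff)
  then have "(\<Sum>x\<in>{x. dsum_coact n x x (ide x) \<noteq> 0}. dsum_coact n x x (ide x)) z
      = (\<Sum>x\<in>{x. n x \<noteq> 0}. (0(x := n x)) z)"
    using fin by (simp add: coact_ide sum_fun_apply)
  also have "\<dots> = (\<Sum>x\<in>{x. n x \<noteq> 0}. if z = x then n x else 0)"
    by (rule sum.cong) auto
  also have "\<dots> = n z" using fin by (simp add: sum.delta)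
  finally show "n z = (\<Sum>x\<in>{x. dsum_coact n x x (ide x) \<noteq> 0}. dsum_coact n x x (ide x)) z"
    by simp
qed

lemma dsum_right_comodule:
  assumes "finite_support_module Hom Mc act"
  shows "right_comodule sE Hom cmp ide dsum_scale dsum_car dsum_coact"
  unfolding right_comodule_def
proof (intro conjI allI impI ballI dsum_vector_space dsum_subspace dsum_counit
    dsum_coact_support_finite[OF assms])
  fix n x y f
  show "n \<in> dsum_car \<Longrightarrow> f \<in> Hom x y \<Longrightarrow> dsum_coact n x y f \<in> dsum_car"
    unfolding dsum_coact_def by (intro single_in_dsum_car act_in_car) (auto simp: dsum_car_def)
  show "f \<in> Hom x y \<Longrightarrow> lin_on dsum_scale dsum_scale dsum_car (\<lambda>n. dsum_coact n x y f)"
    by (auto simp: lin_on_def dsum_coact_def dsum_car_def dsum_scale_def fun_eq_iff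
        act_add act_scale)
  show "n \<in> dsum_car \<Longrightarrow> lin_on sE dsum_scale (Hom x y) (dsum_coact n x y)"
    by (auto simp: lin_on_def dsum_coact_def dsum_car_def dsum_scale_def fun_eq_iff
        act_add_hom act_scale_hom)
next
  fix n x z z' y g h
  assume n: "n \<in> dsum_car" and g: "g \<in> Hom x z" and h: "h \<in> Hom z' y"
  show "dsum_coact (dsum_coact n z' y h) x z g =
      (if z = z' then dsum_coact n x y (cmp x z y h g) else 0)"
    using n g h act_zero act_cmp by (auto simp: dsum_coact_def dsum_car_def)
qed

lemma ups_dsum_car: "ups_car dsum_car dsum_coact ide x = (\<lambda>v. 0(x := v)) ` Mc x"
proof (intro equalityI subsetI)
  fix n assume "n \<in> ups_car dsum_car dsum_coact ide x"
  then obtain n0 where "n0 \<in> dsum_car" and "n = 0(x := act x x (ide x) (n0 x))"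
    by (auto simp: ups_car_def dsum_coact_def)
  then show "n \<in> (\<lambda>v. 0(x := v)) ` Mc x"
    using act_in_car[OF ide_in_hom] by (auto simp: dsum_car_def)
next
  fix n assume "n \<in> (\<lambda>v. 0(x := v)) ` Mc x"
  then obtain v where v: "v \<in> Mc x" and "n = 0(x := v)" by blast
  then have "n = dsum_coact (0(x := v)) x x (ide x)" using act_ide by (simp add: dsum_coact_def)
  then show "n \<in> ups_car dsum_car dsum_coact ide x"
    using single_in_dsum_car[OF v] by (auto simp: ups_car_def)
qed

lemma ess_image_if_finite_support:
  assumes "finite_support_module Hom Mc act"
  shows "in_ess_image TYPE('o \<Rightarrow> 'v) sE Hom cmp ide sM Mc act"
proof -
  have "mod_iso Hom sM Mc act dsum_scale (ups_car dsum_car dsum_coact ide) (ups_act dsum_coact)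
      (\<lambda>x v. 0(x := v))"
    unfolding mod_iso_def mod_hom_def ups_dsum_car
    by (auto simp: lin_on_def dsum_scale_def fun_eq_iff ups_act_def dsum_coact_def
        bij_betw_def inj_on_def)
  then show ?thesis
    unfolding in_ess_image_def using dsum_right_comodule[OF assms] by blast
qed

end

theorem proposition6p7:
  fixes sE :: "'k::field \<Rightarrow> 'm::ab_group_add \<Rightarrow> 'm"
    and Hom :: "'o \<Rightarrow> 'o \<Rightarrow> 'm set"
    and cmp :: "'o \<Rightarrow> 'o \<Rightarrow> 'o \<Rightarrow> 'm \<Rightarrow> 'm \<Rightarrow> 'm"
    and ide :: "'o \<Rightarrow> 'm"
    and sL :: "'k \<Rightarrow> 'l::ab_group_add \<Rightarrow> 'l" and Lc :: "'o \<Rightarrow> 'l set"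
    and actL :: "'o \<Rightarrow> 'o \<Rightarrow> 'm \<Rightarrow> 'l \<Rightarrow> 'l"
    and sM :: "'k \<Rightarrow> 'v::ab_group_add \<Rightarrow> 'v" and Mc :: "'o \<Rightarrow> 'v set"
    and actM :: "'o \<Rightarrow> 'o \<Rightarrow> 'm \<Rightarrow> 'v \<Rightarrow> 'v"
    and sN :: "'k \<Rightarrow> 'n::ab_group_add \<Rightarrow> 'n" and Nc :: "'o \<Rightarrow> 'n set"
    and actN :: "'o \<Rightarrow> 'o \<Rightarrow> 'm \<Rightarrow> 'n \<Rightarrow> 'n"
    and \<alpha> :: "'o \<Rightarrow> 'l \<Rightarrow> 'v" and \<beta> :: "'o \<Rightarrow> 'v \<Rightarrow> 'n"
  assumes "klin_cat sE Hom cmp ide"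
    and "left_slf sE Hom cmp"
    and "right_module sE Hom cmp ide sL Lc actL"
    and "right_module sE Hom cmp ide sM Mc actM"
    and "right_module sE Hom cmp ide sN Nc actN"
    and "short_exact Hom sL Lc actL sM Mc actM sN Nc actN \<alpha> \<beta>"
    and "in_ess_image TYPE('a::ab_group_add) sE Hom cmp ide sL Lc actL"
    and "in_ess_image TYPE('b::ab_group_add) sE Hom cmp ide sN Nc actN"
  shows "in_ess_image TYPE('o \<Rightarrow> 'v) sE Hom cmp ide sM Mc actM"
proof -
  interpret L: right_E_module sE Hom cmp ide sL Lc actL using assms(1,3) by (rule right_E_moduleI)
  interpret M: right_E_module sE Hom cmp ide sM Mc actM using assms(1,4) by (rule right_E_moduleI)
  interpret N: right_E_module sE Hom cmp ide sN Nc actN using assms(1,5) by (rule right_E_moduleI)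
  have "finite_support_module Hom Lc actL"
    using L.finite_support_if_ess_image[OF assms(7)] .
  moreover have "finite_support_module Hom Nc actN"
    using N.finite_support_if_ess_image[OF assms(8)] .
  ultimately have "finite_support_module Hom Mc actM"
    using finite_support_extension[OF assms(1-6)] by blast
  then show ?thesis by (rule M.ess_image_if_finite_support)
qed

end
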